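(* Let $E,F$ be projections in $\mathcal B(\mathcal H)$. The following are equivalent: (1) $E\wedge F=0$ and $(E\vee F)\mathcal H=\{\xi+\beta:\ \xi\in E\mathcal H,\ \beta\in F\mathcal H\}$; (2) $E-F$ restricts to an invertible operator in $\mathcal B((E\vee F)\mathcal H)$; (3) $(E\vee F-F)E$ is an invertible operator in $\mathcal B(E\mathcal H,(E\vee F-F)\mathcal H)$. If these conditions hold, then $$\|((E-F)|_{(E\vee F)\mathcal H})^{-1}\|=(1-\|EF\|^2)^{-1/2}=\|[(E\vee F-F)E]^{-1}\|.$$ *)

theory Defs
  imports "HOL-Analysis.Analysis"
begin

text \<open>Hilbert space: a (real) complete inner product space, type class
  {real_inner, complete_space}.  Operators are functions 'a \<Rightarrow> 'a.\<close>

definition is_projection :: "('a::real_inner \<Rightarrow> 'a) \<Rightarrow> bool" where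
  "is_projection E \<longleftrightarrow> bounded_linear E \<and> (\<forall>x. E (E x) = E x)
     \<and> (\<forall>x y. inner (E x) y = inner x (E y))"

definition proj_onto :: "'a::real_inner set \<Rightarrow> ('a \<Rightarrow> 'a)" where
  "proj_onto M = (THE P. is_projection P \<and> range P = M)"

definition proj_meet :: "('a::real_inner \<Rightarrow> 'a) \<Rightarrow> ('a \<Rightarrow> 'a) \<Rightarrow> ('a \<Rightarrow> 'a)" where
  "proj_meet E F = proj_onto (range E \<inter> range F)"

definition proj_join :: "('a::real_inner \<Rightarrow> 'a) \<Rightarrow> ('a \<Rightarrow> 'a) \<Rightarrow> ('a \<Rightarrow> 'a)" where
  "proj_join E F = proj_onto (closure {E x + F y | x y. True})"

definition invertible_between :: "('a::real_normed_vector \<Rightarrow> 'b::real_normed_vector) \<Rightarrow> 'a set \<Rightarrow> 'b set \<Rightarrow> bool" where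
  "invertible_between T A B \<longleftrightarrow> bij_betw T A B \<and> (\<exists>C. \<forall>y\<in>B. norm (inv_into A T y) \<le> C * norm y)"

definition opnorm_on :: "'a set \<Rightarrow> ('a::real_normed_vector \<Rightarrow> 'b::real_normed_vector) \<Rightarrow> real" where
  "opnorm_on B G = (SUP y\<in>B - {0}. norm (G y) / norm y)"

end

theory Submission
  imports Defs
begin

(* Let c = ||EF|| and K = (1 - c^2) powr (-1/2).  For \<xi> in EH one has
   ||\<xi> - F \<xi>||^2 = ||\<xi>||^2 - ||F \<xi>||^2 >= (1 - c^2) ||\<xi>||^2, and c < 1 holds exactly
   when 1 - F is bounded below on EH, with K the best bound.  All three conditions are
   equivalent to c < 1.

   If c < 1, then EH + FH is closed, being the preimage under 1 - F of the closed set
   (1 - F) EH, so it is (E \<or> F)H.  Splitting x in (E \<or> F)H as E x + (x - E x) gives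
   ||x|| <= K ||(E - F) x||, and the self-adjoint E - F, bounded below on (E \<or> F)H, maps it
   onto itself.  On EH the operator (E \<or> F - F) E acts as 1 - F, which maps EH onto
   (E \<or> F - F)H.  Conversely, conditions (2) and (3) bound 1 - F below on EH directly.
   Under (1), 1 - F maps EH onto (E \<or> F - F)H; by uniform boundedness its adjoint E is
   bounded below on (E \<or> F - F)H, so it has closed range, which is all of EH because
   EH and FH meet only in 0; this again bounds 1 - F below on EH.

   Both inverses have norm at most K by these lower bounds, and at least K because they
   send \<xi> - F \<xi> back to \<xi> for \<xi> in EH. *)

section \<open>Orthogonal projections\<close>

lemma projection_bounded_linear: "is_projection P \<Longrightarrow> bounded_linear P"
  and projection_idem: "is_projection P \<Longrightarrow> P (P x) = P x"
  and projection_selfadjoint: "is_projection P \<Longrightarrow> inner (P x) y = inner x (P y)"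
  unfolding is_projection_def by auto

lemma projection_add: "is_projection P \<Longrightarrow> P (x + y) = P x + P y"
  and projection_diff: "is_projection P \<Longrightarrow> P (x - y) = P x - P y"
  and projection_zero: "is_projection P \<Longrightarrow> P 0 = 0"
  by (simp_all add: projection_bounded_linear bounded_linear.axioms(1) linear_add linear_diff linear_0)

lemma range_projection_iff: "is_projection P \<Longrightarrow> x \<in> range P \<longleftrightarrow> P x = x"
  by (metis projection_idem rangeE rangeI)

lemma projection_orthogonal:
  assumes "is_projection P"
  shows "inner (x - P x) (P y) = 0"
proof -
  have "inner (x - P x) (P y) = inner (P (x - P x)) y"
    using projection_selfadjoint[OF assms] by simp
  also have "\<dots> = 0"
    using assms by (simp add: projection_diff projection_idem)
  finally show ?thesis .
qed

lemma projection_Pythagorean: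
  "is_projection P \<Longrightarrow> (norm x)\<^sup>2 = (norm (P x))\<^sup>2 + (norm (x - P x))\<^sup>2"
  using norm_add_Pythagorean[of "P x" "x - P x"] projection_orthogonal[of P x x]
  by (simp add: orthogonal_def inner_commute)

lemma projection_norm_le: "is_projection P \<Longrightarrow> norm (P x) \<le> norm x"
  and projection_complement_norm_le: "is_projection P \<Longrightarrow> norm (x - P x) \<le> norm x"
  using projection_Pythagorean[of P x] by (auto intro: power2_le_imp_le)

lemma subspace_range_projection: "is_projection P \<Longrightarrow> subspace (range P)"
  by (metis projection_bounded_linear bounded_linear.linear linear_subspace_image subspace_UNIV)

lemma closed_range_projection: "is_projection P \<Longrightarrow> closed (range P)"
proof -
  assume P: "is_projection P"
  have "range P = {x. P x = x}"
    using range_projection_iff[OF P] by blast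
  moreover have "continuous_on UNIV P"
    using linear_continuous_on[OF projection_bounded_linear[OF P]] .
  ultimately show ?thesis
    by (simp add: closed_Collect_eq continuous_on_id)
qed

lemma projection_comp_eq:
  assumes P: "is_projection P" and Q: "is_projection Q" and "range P \<subseteq> range Q"
  shows "P (Q x) = P x"
proof -
  have "Q (P y) = P y" for y
    using assms(3) range_projection_iff[OF Q] by blast
  then have "inner (P (Q x)) y = inner (P x) y" for y
    by (simp add: projection_selfadjoint[OF P] projection_selfadjoint[OF Q, of x])
  then have "inner (P (Q x) - P x) y = 0" for y
    by (simp add: inner_diff_left)
  from this[of "P (Q x) - P x"] show ?thesis
    by simp
qed

lemma subspace_closure:
  fixes S :: "'a::real_normed_vector set"
  assumes "subspace S"
  shows "subspace (closure S)"
proof -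
  have "(\<lambda>p. fst p + snd p) ` closure (S \<times> S) \<subseteq> closure ((\<lambda>p. fst p + snd p) ` (S \<times> S))"
    by (intro closure_bounded_linear_image_subset bounded_linear_add bounded_linear_fst bounded_linear_snd)
  also have "\<dots> \<subseteq> closure S"
    using assms by (intro closure_mono) (auto simp: subspace_add)
  finally have add: "x + y \<in> closure S" if "x \<in> closure S" "y \<in> closure S" for x y
    using that by (force simp: closure_Times)
  have "(*\<^sub>R) a ` closure S \<subseteq> closure ((*\<^sub>R) a ` S)" for a
    by (intro closure_bounded_linear_image_subset bounded_linear_scaleR_right)
  also have "closure ((*\<^sub>R) a ` S) \<subseteq> closure S" for a
    using assms by (intro closure_mono) (auto simp: subspace_scale)
  finally have "a *\<^sub>R x \<in> closure S" if "x \<in> closure S" for a x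
    using that by blast
  with add show ?thesis
    using assms closure_subset[of S] by (auto simp: subspace_def)
qed

lemma parallelogram_law:
  fixes a b :: "'a::real_inner"
  shows "(norm (a + b))\<^sup>2 + (norm (a - b))\<^sup>2 = 2 * (norm a)\<^sup>2 + 2 * (norm b)\<^sup>2"
  by (simp add: power2_norm_eq_inner inner_add inner_diff inner_commute)

lemma dist_sq_le_infdist_convex:
  fixes x a b :: "'a::real_inner"
  assumes "convex M" "a \<in> M" "b \<in> M"
  shows "(dist a b)\<^sup>2 \<le> 2 * (dist x a)\<^sup>2 + 2 * (dist x b)\<^sup>2 - 4 * (infdist x M)\<^sup>2"
proof -
  let ?m = "(1/2) *\<^sub>R a + (1/2) *\<^sub>R b"
  have "?m \<in> M"
    using assms by (intro convexD) auto
  moreover have "x - ?m = (1/2) *\<^sub>R ((x - a) + (x - b))"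
    by (simp add: algebra_simps scaleR_2 flip: scaleR_add_left)
  ultimately have "2 * infdist x M \<le> norm ((x - a) + (x - b))"
    using infdist_le[of ?m M x] by (simp add: dist_norm)
  then have "4 * (infdist x M)\<^sup>2 \<le> (norm ((x - a) + (x - b)))\<^sup>2"
    using power_mono[of _ _ 2] infdist_nonneg[of x M] by (fastforce simp: power_mult_distrib)
  moreover have "(x - a) - (x - b) = b - a" "dist a b = norm (b - a)"
    by (simp_all add: dist_norm norm_minus_commute)
  ultimately show ?thesis
    using parallelogram_law[of "x - a" "x - b"] by (simp add: dist_norm)
qed

lemma nearest_point_exists:
  fixes M :: "'a::{real_inner,complete_space} set"
  assumes "convex M" "closed M" "M \<noteq> {}"
  shows "\<exists>m\<in>M. \<forall>a\<in>M. dist x m \<le> dist x a"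
proof -
  define d where "d = infdist x M"
  have "\<exists>a\<in>M. (dist x a)\<^sup>2 < d\<^sup>2 + inverse (Suc n)" for n
  proof -
    have "d < sqrt (d\<^sup>2 + inverse (Suc n))"
      by (intro real_less_rsqrt) simp
    then have "(INF a\<in>M. dist x a) < sqrt (d\<^sup>2 + inverse (Suc n))"
      unfolding d_def infdist_notempty[OF assms(3)] .
    moreover have "bdd_below ((\<lambda>a. dist x a) ` M)"
      by (rule bdd_belowI[of _ 0]) auto
    ultimately obtain a where "a \<in> M" "dist x a < sqrt (d\<^sup>2 + inverse (Suc n))"
      using cINF_less_iff[OF assms(3)] by blast
    then show ?thesis
      by (metis real_sqrt_less_iff zero_le_dist real_sqrt_abs abs_of_nonneg)
  qed
  then obtain m where m: "\<And>n. m n \<in> M" and md: "\<And>n. (dist x (m n))\<^sup>2 < d\<^sup>2 + inverse (Suc n)"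
    by metis
  have close: "(dist (m n) (m k))\<^sup>2 < 2 * inverse (Suc n) + 2 * inverse (Suc k)" for n k
    using dist_sq_le_infdist_convex[OF assms(1) m[of n] m[of k], where x = x] md[of n] md[of k] unfolding d_def
    by linarith
  have "Cauchy m"
  proof (rule metric_CauchyI)
    fix e :: real assume "e > 0"
    then obtain N where N: "N > 0" "inverse (real N) < e\<^sup>2 / 4"
      using ex_inverse_of_nat_less[of "e\<^sup>2 / 4"] by auto
    have "dist (m n) (m k) < e" if "N \<le> n" "N \<le> k" for n k
    proof -
      have "inverse (Suc n) \<le> inverse (real N)" "inverse (Suc k) \<le> inverse (real N)"
        using that N(1) by (auto intro!: le_imp_inverse_le)
      with close[of n k] N(2) have "(dist (m n) (m k))\<^sup>2 < e\<^sup>2"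
        by linarith
      with \<open>e > 0\<close> show ?thesis
        by (simp add: power_less_imp_less_base)
    qed
    then show "\<exists>N. \<forall>n\<ge>N. \<forall>k\<ge>N. dist (m n) (m k) < e"
      by blast
  qed
  then obtain L where L: "m \<longlonglongrightarrow> L"
    using convergent_eq_Cauchy by blast
  have "L \<in> M"
    using closed_sequentially[OF assms(2) m L] .
  moreover have "(dist x L)\<^sup>2 \<le> d\<^sup>2"
  proof (rule LIMSEQ_le)
    show "(\<lambda>n. (dist x (m n))\<^sup>2) \<longlonglongrightarrow> (dist x L)\<^sup>2"
      using L by (intro tendsto_intros)
    show "(\<lambda>n. d\<^sup>2 + inverse (Suc n)) \<longlonglongrightarrow> d\<^sup>2"
      using tendsto_add[OF tendsto_const LIMSEQ_inverse_real_of_nat] by simp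
    show "\<exists>N. \<forall>n\<ge>N. (dist x (m n))\<^sup>2 \<le> d\<^sup>2 + inverse (Suc n)"
      using md less_imp_le by blast
  qed
  then have "dist x L \<le> d"
    using infdist_nonneg[of x M] unfolding d_def by (rule power2_le_imp_le)
  then have "dist x L \<le> dist x a" if "a \<in> M" for a
    using infdist_le[OF that, of x] unfolding d_def by (rule order_trans)
  with \<open>L \<in> M\<close> show ?thesis
    by blast
qed

lemma nearest_point_orthogonal:
  fixes M :: "'a::real_inner set"
  assumes "subspace M" "m \<in> M" "\<forall>a\<in>M. dist x m \<le> dist x a" "y \<in> M"
  shows "inner (x - m) y = 0"
proof (cases "y = 0")
  case False
  define z where "z = x - m"
  define t where "t = inner z y / (norm y)\<^sup>2"
  have "m + t *\<^sub>R y \<in> M"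
    using assms by (simp add: subspace_add subspace_scale)
  with assms(3) have "(norm z)\<^sup>2 \<le> (norm (z - t *\<^sub>R y))\<^sup>2"
    unfolding z_def by (force simp: dist_norm algebra_simps intro: power_mono)
  also have "\<dots> = (norm z)\<^sup>2 - 2 * t * inner z y + t\<^sup>2 * (norm y)\<^sup>2"
    unfolding power2_norm_eq_inner by (simp add: inner_diff inner_commute power2_eq_square algebra_simps)
  also have "\<dots> = (norm z)\<^sup>2 - (inner z y)\<^sup>2 / (norm y)\<^sup>2"
    using False by (simp add: t_def field_simps power2_eq_square)
  finally show ?thesis
    using False by (simp add: z_def divide_le_0_iff)
qed simp

lemma orthogonal_decomposition:
  fixes M :: "'a::{real_inner,complete_space} set"
  assumes "subspace M" "closed M"
  shows "\<exists>m\<in>M. \<forall>y\<in>M. inner (x - m) y = 0"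
proof -
  have "M \<noteq> {}"
    using subspace_0[OF assms(1)] by blast
  then show ?thesis
    using nearest_point_exists[of M x] nearest_point_orthogonal[OF assms(1)] assms
    by (meson subspace_imp_convex)
qed

lemma orthogonal_decomposition_unique:
  fixes M :: "'a::real_inner set"
  assumes "subspace M" "m \<in> M" "\<forall>y\<in>M. inner (x - m) y = 0" "m' \<in> M" "\<forall>y\<in>M. inner (x - m') y = 0"
  shows "m = m'"
proof -
  have "m - m' \<in> M"
    using assms by (simp add: subspace_diff)
  then have "inner (m - m') (m - m') = inner (x - m') (m - m') - inner (x - m) (m - m')"
    by (simp add: inner_diff algebra_simps)
  also have "\<dots> = 0"
    using assms \<open>m - m' \<in> M\<close> by simp
  finally show ?thesis
    by simp
qed

lemma projection_eqI:
  assumes "is_projection P" "is_projection Q" "range P = range Q"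
  shows "P = Q"
proof
  fix x
  have "\<forall>y\<in>range P. inner (x - P x) y = 0"
    using projection_orthogonal[OF assms(1)] by blast
  moreover have "\<forall>y\<in>range P. inner (x - Q x) y = 0" "Q x \<in> range P"
    unfolding assms(3) using projection_orthogonal[OF assms(2)] by blast+
  ultimately show "P x = Q x"
    using orthogonal_decomposition_unique[OF subspace_range_projection[OF assms(1)]] by blast
qed

lemma projection_if_orthogonal:
  fixes M :: "'a::real_inner set"
  assumes M: "subspace M" and P: "\<And>x. P x \<in> M" "\<And>x y. y \<in> M \<Longrightarrow> inner (x - P x) y = 0"
  shows "is_projection P" "range P = M"
proof -
  have P_eqI: "P x = m" if "m \<in> M" "\<And>y. y \<in> M \<Longrightarrow> inner (x - m) y = 0" for x m
    by (rule orthogonal_decomposition_unique[OF M P(1)]) (use P(2) that in auto)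
  have "P (x + y) = P x + P y" for x y
  proof (rule P_eqI)
    show "P x + P y \<in> M"
      using P(1) M by (simp add: subspace_add)
    have "x + y - (P x + P y) = (x - P x) + (y - P y)"
      by simp
    then show "inner (x + y - (P x + P y)) z = 0" if "z \<in> M" for z
      using P(2)[OF that, of x] P(2)[OF that, of y] by (simp only: inner_add_left)
  qed
  moreover have "P (a *\<^sub>R x) = a *\<^sub>R P x" for a x
  proof (rule P_eqI)
    show "a *\<^sub>R P x \<in> M"
      using P(1) M by (simp add: subspace_scale)
    have "a *\<^sub>R x - a *\<^sub>R P x = a *\<^sub>R (x - P x)"
      by (simp add: scaleR_diff_right)
    then show "inner (a *\<^sub>R x - a *\<^sub>R P x) z = 0" if "z \<in> M" for z
      using P(2)[OF that, of x] by simp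
  qed
  moreover have "norm (P x) \<le> norm x" for x
  proof (rule power2_le_imp_le)
    have "inner (P x) (x - P x) = 0"
      using P(2)[OF P(1), of x] by (simp add: inner_commute)
    then show "(norm (P x))\<^sup>2 \<le> (norm x)\<^sup>2"
      using norm_add_Pythagorean[of "P x" "x - P x"] by (simp add: orthogonal_def)
  qed simp
  ultimately have "bounded_linear P"
    by (intro bounded_linear_intro[where K = 1]) auto
  moreover have "inner (P x) y = inner x (P y)" for x y
  proof -
    have "inner (P x) (y - P y) = 0"
      using P(2)[OF P(1), of y x] by (simp add: inner_commute)
    moreover have "inner (x - P x) (P y) = 0"
      using P(2)[OF P(1)] .
    ultimately show ?thesis
      by (simp add: inner_diff)
  qed
  moreover have P_fix: "P m = m" if "m \<in> M" for m
    using that by (intro P_eqI) auto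
  ultimately show "is_projection P"
    using P(1) unfolding is_projection_def by auto
  show "range P = M"
    using P(1) P_fix by (metis image_subset_iff rangeI subsetI subset_antisym)
qed

lemma projection_exists:
  fixes M :: "'a::{real_inner,complete_space} set"
  assumes "subspace M" "closed M"
  shows "\<exists>P. is_projection P \<and> range P = M"
proof -
  define P where "P x = (SOME m. m \<in> M \<and> (\<forall>y\<in>M. inner (x - m) y = 0))" for x
  have "P x \<in> M \<and> (\<forall>y\<in>M. inner (x - P x) y = 0)" for x
    unfolding P_def by (rule someI_ex) (use orthogonal_decomposition[OF assms, of x] in blast)
  then have "is_projection P" "range P = M"
    using projection_if_orthogonal[OF assms(1), of P] by auto
  then show ?thesis
    by blast
qed

lemma
  fixes M :: "'a::{real_inner,complete_space} set"
  assumes "subspace M" "closed M"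
  shows is_projection_proj_onto: "is_projection (proj_onto M)"
    and range_proj_onto: "range (proj_onto M) = M"
proof -
  have "\<exists>!P. is_projection P \<and> range P = M"
    using projection_exists[OF assms] projection_eqI by blast
  then have "is_projection (proj_onto M) \<and> range (proj_onto M) = M"
    unfolding proj_onto_def by (rule theI')
  then show "is_projection (proj_onto M)" "range (proj_onto M) = M"
    by auto
qed

lemma proj_onto_orthogonal:
  fixes M :: "'a::{real_inner,complete_space} set"
  assumes "subspace M" "closed M" "y \<in> M"
  shows "inner (x - proj_onto M x) y = 0"
proof -
  obtain z where "y = proj_onto M z"
    using assms range_proj_onto by blast
  then show ?thesis
    using projection_orthogonal[OF is_projection_proj_onto[OF assms(1,2)]] by simp
qed

lemma proj_onto_zero: "proj_onto {0::'a::{real_inner,complete_space}} = (\<lambda>_. 0)"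
proof (rule projection_eqI)
  show "is_projection (proj_onto {0::'a})" "range (proj_onto {0::'a}) = range (\<lambda>_. 0::'a)"
    by (simp_all add: is_projection_proj_onto range_proj_onto)
  show "is_projection (\<lambda>_. 0::'a)"
    by (simp add: is_projection_def bounded_linear_zero)
qed

section \<open>Operators bounded below\<close>

lemma closed_subspace_eqI:
  fixes R :: "'a::{real_inner,complete_space} set"
  assumes "subspace R" "closed R" "subspace V" "R \<subseteq> V"
    and "\<And>v. v \<in> V \<Longrightarrow> \<forall>r\<in>R. inner v r = 0 \<Longrightarrow> v = 0"
  shows "R = V"
proof -
  have "v \<in> R" if "v \<in> V" for v
  proof -
    let ?P = "proj_onto R"
    have "?P v \<in> R"
      using range_proj_onto[OF assms(1,2)] by blast
    moreover have "\<forall>r\<in>R. inner (v - ?P v) r = 0"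
      using proj_onto_orthogonal[OF assms(1,2)] by blast
    moreover have "v - ?P v \<in> V"
      using \<open>?P v \<in> R\<close> assms(3,4) that by (blast intro: subspace_diff)
    ultimately show ?thesis
      using assms(5) by force
  qed
  with assms(4) show ?thesis
    by blast
qed

lemma inj_on_bounded_below:
  assumes "linear T" "subspace V" "\<And>x. x \<in> V \<Longrightarrow> norm x \<le> C * norm (T x)"
  shows "inj_on T V"
proof (rule inj_onI)
  fix x y assume "x \<in> V" "y \<in> V" "T x = T y"
  then have "norm (x - y) \<le> C * norm (T (x - y))"
    using assms(2,3) by (simp add: subspace_diff)
  also have "T (x - y) = 0"
    using \<open>T x = T y\<close> assms(1) by (simp add: linear_diff)
  finally show "x = y"
    by simp
qed

lemma closed_image_bounded_below:
  fixes T :: "'a::{real_normed_vector,complete_space} \<Rightarrow> 'b::{real_normed_vector,complete_space}"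
  assumes "bounded_linear T" "subspace V" "closed V" "\<And>x. x \<in> V \<Longrightarrow> norm x \<le> C * norm (T x)"
  shows "closed (T ` V)"
proof -
  have "inverse (max C 1) * norm x \<le> norm (T x)" if "x \<in> V" for x
  proof -
    have "norm x \<le> max C 1 * norm (T x)"
      using assms(4)[OF that] by (rule order_trans) (simp add: mult_right_mono)
    then show ?thesis
      by (simp add: field_simps)
  qed
  then show ?thesis
    using complete_isometric_image[of "inverse (max C 1)" V T] assms(1-3)
    by (simp add: complete_eq_closed)
qed

lemma selfadjoint_bounded_below_onto:
  fixes A :: "'a::{real_inner,complete_space} \<Rightarrow> 'a"
  assumes A: "bounded_linear A" "\<And>x y. inner (A x) y = inner x (A y)"
    and V: "subspace V" "closed V" "A ` V \<subseteq> V"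
    and below: "\<And>x. x \<in> V \<Longrightarrow> norm x \<le> C * norm (A x)"
  shows "A ` V = V"
proof (rule closed_subspace_eqI[OF _ _ V(1,3)])
  show "subspace (A ` V)"
    using A(1) V(1) by (simp add: bounded_linear.linear linear_subspace_image)
  show "closed (A ` V)"
    using closed_image_bounded_below[OF A(1) V(1,2) below] .
  fix v assume "v \<in> V" and orth: "\<forall>r\<in>A ` V. inner v r = 0"
  then have "A (A v) \<in> A ` V"
    using V(3) by blast
  then have "inner v (A (A v)) = 0"
    using orth by blast
  then have "inner (A v) (A v) = 0"
    using A(2)[of v "A v"] by simp
  then show "v = 0"
    using below[OF \<open>v \<in> V\<close>] by simp
qed

lemma norm_le_if_adjoint_norm_le:
  fixes A B :: "'a::real_inner \<Rightarrow> 'a"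
  assumes "\<And>x y. inner (A x) y = inner x (B y)" "\<And>y. norm (B y) \<le> k * norm y"
  shows "norm (A x) \<le> k * norm x"
proof -
  have "(norm (A x))\<^sup>2 = inner x (B (A x))"
    using assms(1) by (simp add: power2_norm_eq_inner)
  also have "\<dots> \<le> norm x * (k * norm (A x))"
    using norm_cauchy_schwarz[of x "B (A x)"] assms(2)[of "A x"] by (meson mult_left_mono norm_ge_zero order_trans)
  finally have "norm (A x) * norm (A x) \<le> norm (A x) * (k * norm x)"
    by (simp add: power2_eq_square algebra_simps)
  then show ?thesis
    using order.trans[OF norm_ge_zero assms(2)[of x]] by (cases "norm (A x) = 0") auto
qed

lemma Baire_closed_cover:
  fixes Y :: "'a::complete_space set"
  assumes "closed Y" "Y \<noteq> {}" "\<And>n::nat. closed (A n)" "Y \<subseteq> (\<Union>n. A n)"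
  shows "\<exists>n. \<exists>y\<in>Y. \<exists>r>0. \<forall>w\<in>Y. dist w y < r \<longrightarrow> w \<in> A n"
proof -
  let ?X = "top_of_set Y"
  have "closedin euclidean Y"
    using assms(1) closed_closedin by blast
  then have complete: "completely_metrizable_space ?X"
    by (rule completely_metrizable_space_closedin[OF completely_metrizable_space_euclidean])
  have closed_parts: "closedin ?X (Y \<inter> A n)" for n
    using assms(3) by (simp add: closedin_closed_Int)
  have cover: "\<Union>(range (\<lambda>n. Y \<inter> A n)) = topspace ?X"
    using assms(4) by auto
  have "\<exists>n. ?X interior_of (Y \<inter> A n) \<noteq> {}"
  proof (rule ccontr)
    assume "\<nexists>n. ?X interior_of (Y \<inter> A n) \<noteq> {}"
    with complete closed_parts have "?X interior_of \<Union>(range (\<lambda>n. Y \<inter> A n)) = {}"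
      by (intro Baire_category_alt) auto
    with cover assms(2) show False
      using interior_of_topspace[of ?X] by simp
  qed
  then obtain n y where "y \<in> ?X interior_of (Y \<inter> A n)"
    by blast
  moreover have "openin ?X (?X interior_of (Y \<inter> A n))"
    by simp
  ultimately obtain r where "y \<in> Y" "r > 0" "\<forall>w\<in>Y. dist w y < r \<longrightarrow> w \<in> Y \<inter> A n"
    unfolding openin_euclidean_subtopology_iff
    by (meson interior_of_subset subsetD)
  then show ?thesis
    by blast
qed

lemma norm_le_of_inner_bound_on_ball:
  fixes Y :: "'a::real_inner set"
  assumes "subspace Y" "y0 \<in> Y" "r > 0" "z \<in> Y"
    and bound: "\<And>w. w \<in> Y \<Longrightarrow> dist w y0 < r \<Longrightarrow> \<bar>inner w z\<bar> \<le> N"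
  shows "r * norm z \<le> 4 * N"
proof (cases "z = 0")
  case True
  then show ?thesis
    using bound[of y0] assms(2,3) by simp
next
  case False
  define w where "w = y0 + (r / (2 * norm z)) *\<^sub>R z"
  have "w \<in> Y"
    using assms(1,2,4) by (simp add: w_def subspace_add subspace_scale)
  moreover have "dist w y0 < r"
    using False assms(3) by (simp add: w_def dist_norm)
  ultimately have "\<bar>inner w z\<bar> \<le> N" "\<bar>inner y0 z\<bar> \<le> N"
    using bound assms(2,3) by auto
  moreover have "inner w z - inner y0 z = r / 2 * norm z"
    using False by (simp add: w_def inner_add_left power2_eq_square flip: power2_norm_eq_inner)
  ultimately show ?thesis
    by linarith
qed

lemma uniform_boundedness_inner:
  fixes Y :: "'a::{real_inner,complete_space} set"
  assumes Y: "subspace Y" "closed Y"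
    and g: "\<And>z. z \<in> Y \<Longrightarrow> 0 \<le> g z"
    and pointwise: "\<And>y. y \<in> Y \<Longrightarrow> \<exists>C. \<forall>z\<in>Y. \<bar>inner y z\<bar> \<le> C * g z"
  shows "\<exists>M>0. \<forall>z\<in>Y. norm z \<le> M * g z"
proof -
  define A where "A n = (\<Inter>z\<in>Y. {y. \<bar>inner y z\<bar> \<le> real n * g z})" for n :: nat
  have closed: "closed (A n)" for n
    unfolding A_def by (intro closed_INT ballI closed_Collect_le continuous_intros)
  have cover: "Y \<subseteq> (\<Union>n. A n)"
  proof
    fix y assume "y \<in> Y"
    then obtain C where C: "\<forall>z\<in>Y. \<bar>inner y z\<bar> \<le> C * g z"
      using pointwise by blast
    have "C * g z \<le> real (nat \<lceil>C\<rceil>) * g z" if "z \<in> Y" for z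
      using g[OF that] by (intro mult_right_mono) (auto intro: real_nat_ceiling_ge)
    with C have "y \<in> A (nat \<lceil>C\<rceil>)"
      unfolding A_def by (blast intro: order_trans)
    then show "y \<in> (\<Union>n. A n)"
      by blast
  qed
  have "Y \<noteq> {}"
    using subspace_0[OF Y(1)] by blast
  then obtain n y0 r where y0: "y0 \<in> Y" "r > 0" "\<And>w. w \<in> Y \<Longrightarrow> dist w y0 < r \<Longrightarrow> w \<in> A n"
    using Baire_closed_cover[OF Y(2) _ closed cover] by blast
  have "norm z \<le> ((4 * real n + 1) / r) * g z" if "z \<in> Y" for z
  proof -
    have "r * norm z \<le> 4 * (real n * g z)"
      using y0 that by (intro norm_le_of_inner_bound_on_ball[OF Y(1)]) (auto simp: A_def)
    also have "\<dots> \<le> (4 * real n + 1) * g z"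
      using g[OF that] by (simp add: algebra_simps)
    finally show ?thesis
      using y0(2) by (simp add: field_simps)
  qed
  moreover have "(4 * real n + 1) / r > 0"
    using y0(2) by simp
  ultimately show ?thesis
    by blast
qed

lemma opnorm_on_le:
  assumes "\<exists>y\<in>B. y \<noteq> 0" "\<And>y. y \<in> B \<Longrightarrow> norm (G y) \<le> K * norm y"
  shows "opnorm_on B G \<le> K"
  unfolding opnorm_on_def using assms
  by (intro cSUP_least) (auto simp: pos_divide_le_eq)

lemma norm_le_opnorm_on:
  assumes "\<And>y. y \<in> B \<Longrightarrow> norm (G y) \<le> K * norm y" "y \<in> B" "y \<noteq> 0"
  shows "norm (G y) \<le> opnorm_on B G * norm y"
proof -
  have "bdd_above ((\<lambda>y. norm (G y) / norm y) ` (B - {0}))"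
    using assms(1) by (intro bdd_aboveI2[of _ _ K]) (auto simp: pos_divide_le_eq)
  then have "norm (G y) / norm y \<le> opnorm_on B G"
    unfolding opnorm_on_def using assms(2,3) by (intro cSUP_upper) auto
  then show ?thesis
    using assms(3) by (simp add: pos_divide_le_eq)
qed

lemma invertible_between_iff:
  "invertible_between T A B \<longleftrightarrow> bij_betw T A B \<and> (\<exists>C. \<forall>x\<in>A. norm x \<le> C * norm (T x))"
proof -
  have "(\<forall>y\<in>B. norm (inv_into A T y) \<le> C * norm y) \<longleftrightarrow> (\<forall>x\<in>A. norm x \<le> C * norm (T x))"
    if "bij_betw T A B" for C
    using that by (auto simp: bij_betw_def inv_into_f_f)
  then show ?thesis
    unfolding invertible_between_def by blast
qed

lemma le_powr_neg_half_mult: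
  fixes q a b :: real
  assumes "q > 0" "0 \<le> b" "q * a\<^sup>2 \<le> b\<^sup>2"
  shows "a \<le> q powr (-1/2) * b"
proof -
  have "a\<^sup>2 * q \<le> b\<^sup>2"
    using assms(3) by (simp only: mult.commute)
  then have "a\<^sup>2 \<le> b\<^sup>2 / q"
    using assms(1) by (simp only: pos_le_divide_eq)
  also have "\<dots> = (b / sqrt q)\<^sup>2"
    using assms(1) by (simp only: power_divide real_sqrt_pow2 less_imp_le)
  finally have "a \<le> b / sqrt q"
    by (rule power2_le_imp_le) (use assms(1,2) in simp)
  moreover have "q powr (-1/2) = 1 / sqrt q"
    using assms(1) powr_minus_divide[of q "1/2"] by (simp add: powr_half_sqrt)
  ultimately show ?thesis
    by simp
qed

lemma powr_neg_half_le_iff: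
  fixes q M :: real
  assumes "q > 0" "M \<ge> 0"
  shows "q powr (-1/2) \<le> M \<longleftrightarrow> 1 \<le> q * M\<^sup>2"
proof -
  have "q powr (-1/2) = 1 / sqrt q"
    using assms(1) powr_minus_divide[of q "1/2"] by (simp add: powr_half_sqrt)
  moreover have "1 / sqrt q \<le> M \<longleftrightarrow> 1 \<le> sqrt q * M"
    using assms(1) by (simp add: divide_le_eq mult.commute)
  moreover have "sqrt (q * M\<^sup>2) = sqrt q * M"
    using assms(2) by (simp add: real_sqrt_mult)
  ultimately show ?thesis
    by (metis real_sqrt_ge_1_iff)
qed

section \<open>Two projections\<close>

locale two_projections =
  fixes E F :: "'a::{real_inner,complete_space} \<Rightarrow> 'a"
  assumes E: "is_projection E" and F: "is_projection F"
begin

abbreviation J where "J \<equiv> proj_join E F"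

definition S where "S = {\<xi> + \<beta> | \<xi> \<beta>. \<xi> \<in> range E \<and> \<beta> \<in> range F}"

definition Y where "Y = range (\<lambda>x. J x - F x)"

definition c where "c = onorm (E \<circ> F)"

definition K where "K = (1 - c\<^sup>2) powr (-1/2)"

lemma subspace_S: "subspace S"
proof -
  have "S = (\<lambda>p. fst p + snd p) ` (range E \<times> range F)"
    unfolding S_def by force
  then show ?thesis
    using subspace_range_projection[OF E] subspace_range_projection[OF F]
    by (simp add: linear_subspace_image subspace_Times linear_compose_add linear_fst linear_snd)
qed

lemma J_projection: "is_projection J" and range_J: "range J = closure S"
proof -
  have "{E x + F y | x y. True} = S"
    unfolding S_def by blast
  then have "J = proj_onto (closure S)"
    unfolding proj_join_def by simp
  then show "is_projection J" "range J = closure S"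
    using is_projection_proj_onto range_proj_onto subspace_closure[OF subspace_S] closed_closure
    by auto
qed

lemma range_E_subset_J: "range E \<subseteq> range J" and range_F_subset_J: "range F \<subseteq> range J"
proof -
  have "\<xi> \<in> S" if "\<xi> \<in> range E" for \<xi>
    using that projection_zero[OF F] unfolding S_def by force
  moreover have "\<beta> \<in> S" if "\<beta> \<in> range F" for \<beta>
    using that projection_zero[OF E] unfolding S_def by force
  ultimately show "range E \<subseteq> range J" "range F \<subseteq> range J"
    unfolding range_J using closure_subset by blast+
qed

lemma J_E: "J (E x) = E x" and J_F: "J (F x) = F x" and F_J: "F (J x) = F x"
  using range_E_subset_J range_F_subset_J range_projection_iff[OF J_projection]
    projection_comp_eq[OF F J_projection range_F_subset_J] by blast+

lemma mem_Y_iff: "z \<in> Y \<longleftrightarrow> J z = z \<and> F z = 0"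
proof
  assume "z \<in> Y"
  then obtain x where z: "z = J x - F x"
    unfolding Y_def by blast
  have "J z = z"
    unfolding z projection_diff[OF J_projection] projection_idem[OF J_projection] J_F ..
  moreover have "F z = 0"
    unfolding z projection_diff[OF F] projection_idem[OF F] F_J by simp
  ultimately show "J z = z \<and> F z = 0" ..
next
  assume "J z = z \<and> F z = 0"
  then have "z = J z - F z"
    by simp
  then show "z \<in> Y"
    unfolding Y_def by (rule range_eqI)
qed

lemma subspace_Y: "subspace Y" and closed_Y: "closed Y"
proof -
  have lin: "bounded_linear (\<lambda>x. J x - F x)"
    using projection_bounded_linear[OF J_projection] projection_bounded_linear[OF F] by (rule bounded_linear_sub)
  then show "subspace Y"
    unfolding Y_def by (simp add: bounded_linear.linear linear_subspace_image)
  have "Y = {z. J z - z = 0} \<inter> {z. F z = 0}"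
    using mem_Y_iff by auto
  moreover have "continuous_on UNIV J" "continuous_on UNIV F"
    using projection_bounded_linear[OF J_projection] projection_bounded_linear[OF F] by (auto intro: linear_continuous_on)
  ultimately show "closed Y"
    by (auto intro!: closed_Int closed_Collect_eq continuous_intros)
qed

lemma inner_Y_complement_F: "z \<in> Y \<Longrightarrow> inner (x - F x) z = inner x z"
  using projection_selfadjoint[OF F, of x z] by (simp add: mem_Y_iff inner_diff_left)

lemma bounded_linear_E_F: "bounded_linear (E \<circ> F)"
  using bounded_linear_compose[OF projection_bounded_linear[OF E] projection_bounded_linear[OF F]]
  by (simp add: comp_def)

lemma c_nonneg: "0 \<le> c"
  unfolding c_def using bounded_linear_E_F by (rule onorm_pos_le)

lemma norm_F_E_le: "norm (F (E x)) \<le> c * norm x"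
proof (rule norm_le_if_adjoint_norm_le)
  show "inner (F (E x)) y = inner x (E (F y))" for x y
    by (simp add: projection_selfadjoint[OF E] projection_selfadjoint[OF F])
  show "norm (E (F y)) \<le> c * norm y" for y
    using onorm[OF bounded_linear_E_F, of y] by (simp add: c_def)
qed

lemma norm_F_on_E: "\<xi> \<in> range E \<Longrightarrow> norm (F \<xi>) \<le> c * norm \<xi>"
  using norm_F_E_le[of \<xi>] range_projection_iff[OF E] by simp

lemma norm_E_on_F: "\<beta> \<in> range F \<Longrightarrow> norm (E \<beta>) \<le> c * norm \<beta>"
  using onorm[OF bounded_linear_E_F, of \<beta>] range_projection_iff[OF F] by (simp add: c_def)

lemma c_le:
  assumes "0 \<le> k" "\<And>\<xi>. \<xi> \<in> range E \<Longrightarrow> norm (F \<xi>) \<le> k * norm \<xi>"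
  shows "c \<le> k"
  unfolding c_def
proof (rule onorm_bound[OF assms(1)])
  fix x
  have "norm (F (E y)) \<le> k * norm y" for y
    using assms(2)[of "E y"] projection_norm_le[OF E, of y] assms(1)
    by (meson order_trans mult_left_mono rangeI)
  then show "norm ((E \<circ> F) x) \<le> k * norm x"
    unfolding comp_def
    by (rule norm_le_if_adjoint_norm_le[rotated])
      (simp add: projection_selfadjoint[OF E] projection_selfadjoint[OF F])
qed

lemma norm_complement_F_sq: "(norm (x - F x))\<^sup>2 = (norm x)\<^sup>2 - (norm (F x))\<^sup>2"
  using projection_Pythagorean[OF F, of x] by simp

lemma norm_complement_F_ge: "\<xi> \<in> range E \<Longrightarrow> (1 - c\<^sup>2) * (norm \<xi>)\<^sup>2 \<le> (norm (\<xi> - F \<xi>))\<^sup>2"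
  using power_mono[OF norm_F_on_E, of \<xi> 2]
  by (simp add: norm_complement_F_sq power_mult_distrib algebra_simps)

lemma K_nonneg: "0 \<le> K"
  by (simp add: K_def)

lemma norm_le_K: "c < 1 \<Longrightarrow> \<xi> \<in> range E \<Longrightarrow> norm \<xi> \<le> K * norm (\<xi> - F \<xi>)"
  unfolding K_def using c_nonneg
  by (intro le_powr_neg_half_mult norm_complement_F_ge) (auto simp: abs_square_less_1)

lemma bounded_below_on_E_iff:
  assumes "1 \<le> M"
  shows "(\<forall>\<xi>\<in>range E. norm \<xi> \<le> M * norm (\<xi> - F \<xi>)) \<longleftrightarrow> c < 1 \<and> K \<le> M"
proof
  assume bound: "\<forall>\<xi>\<in>range E. norm \<xi> \<le> M * norm (\<xi> - F \<xi>)"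
  define k where "k = sqrt (1 - 1 / M\<^sup>2)"
  have M_sq: "1 / M\<^sup>2 \<le> 1" "0 < 1 / M\<^sup>2"
    using assms by (auto simp: power_le_one_iff)
  have "norm (F \<xi>) \<le> k * norm \<xi>" if "\<xi> \<in> range E" for \<xi>
  proof -
    have "(norm \<xi>)\<^sup>2 \<le> M\<^sup>2 * (norm (\<xi> - F \<xi>))\<^sup>2"
      using power_mono[OF bspec[OF bound that], of 2] by (simp add: power_mult_distrib)
    then have "(norm (F \<xi>))\<^sup>2 \<le> k\<^sup>2 * (norm \<xi>)\<^sup>2"
      using assms M_sq by (simp add: k_def norm_complement_F_sq field_simps)
    then have "sqrt ((norm (F \<xi>))\<^sup>2) \<le> sqrt (k\<^sup>2 * (norm \<xi>)\<^sup>2)"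
      by (rule real_sqrt_le_mono)
    then show ?thesis
      using M_sq by (simp add: k_def real_sqrt_mult)
  qed
  then have "c \<le> k"
    using M_sq by (intro c_le) (auto simp: k_def)
  then have "c\<^sup>2 \<le> 1 - 1 / M\<^sup>2"
    using c_nonneg M_sq power_mono[of c k 2] by (simp add: k_def)
  then have "c\<^sup>2 < 1" and "1 \<le> (1 - c\<^sup>2) * M\<^sup>2"
    using M_sq(2) assms by (linarith, simp add: field_simps)
  then have "K \<le> M"
    unfolding K_def using assms by (subst powr_neg_half_le_iff) auto
  with \<open>c\<^sup>2 < 1\<close> show "c < 1 \<and> K \<le> M"
    using c_nonneg by (simp add: abs_square_less_1)
next
  assume "c < 1 \<and> K \<le> M"
  then show "\<forall>\<xi>\<in>range E. norm \<xi> \<le> M * norm (\<xi> - F \<xi>)"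
    using norm_le_K by (meson order_trans mult_right_mono norm_ge_zero)
qed

lemma c_less_1_if_bounded_below:
  assumes "\<And>\<xi>. \<xi> \<in> range E \<Longrightarrow> norm \<xi> \<le> M * norm (\<xi> - F \<xi>)"
  shows "c < 1"
proof -
  have "norm \<xi> \<le> max M 1 * norm (\<xi> - F \<xi>)" if "\<xi> \<in> range E" for \<xi>
    using assms[OF that] by (rule order_trans) (simp add: mult_right_mono)
  then show ?thesis
    using bounded_below_on_E_iff[of "max M 1"] by simp
qed

lemma range_E_Int_range_F: "c < 1 \<Longrightarrow> range E \<inter> range F = {0}"
proof -
  assume "c < 1"
  have "x = 0" if "x \<in> range E" "x \<in> range F" for x
  proof -
    have "norm x \<le> c * norm x"
      using norm_F_on_E[OF that(1)] range_projection_iff[OF F] that(2) by simp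
    then show ?thesis
      using \<open>c < 1\<close> by (metis mult_le_cancel_right1 norm_le_zero_iff not_le)
  qed
  moreover have "0 \<in> range E" "0 \<in> range F"
    using subspace_0 subspace_range_projection E F by blast+
  ultimately show ?thesis
    by blast
qed

lemma closed_S: "c < 1 \<Longrightarrow> closed S"
proof -
  assume "c < 1"
  let ?T = "\<lambda>x. x - F x"
  have lin: "bounded_linear ?T"
    using bounded_linear_ident projection_bounded_linear[OF F] by (rule bounded_linear_sub)
  have "S = ?T -` (?T ` range E)"
  proof (intro equalityI subsetI)
    fix x assume "x \<in> S"
    then obtain \<xi> \<beta> where "x = \<xi> + \<beta>" "\<xi> \<in> range E" "\<beta> \<in> range F"
      unfolding S_def by blast
    then have "?T x = ?T \<xi>"
      using range_projection_iff[OF F] by (simp add: projection_add[OF F])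
    with \<open>\<xi> \<in> range E\<close> show "x \<in> ?T -` (?T ` range E)"
      by (metis image_eqI vimageI)
  next
    fix x assume "x \<in> ?T -` (?T ` range E)"
    then obtain \<xi> where "\<xi> \<in> range E" "x - F x = \<xi> - F \<xi>"
      by blast
    then have "x = \<xi> + F (x - \<xi>)"
      by (simp add: projection_diff[OF F] algebra_simps)
    with \<open>\<xi> \<in> range E\<close> show "x \<in> S"
      unfolding S_def by blast
  qed
  moreover have "closed (?T ` range E)"
    using closed_image_bounded_below[OF lin subspace_range_projection[OF E] closed_range_projection[OF E]]
      norm_le_K[OF \<open>c < 1\<close>] by blast
  ultimately show ?thesis
    using lin by (simp add: continuous_closed_vimage linear_continuous_at)
qed

lemma range_J_eq_S: "c < 1 \<Longrightarrow> range J = S"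
  using closed_S range_J by (simp add: closure_closed)

lemma norm_E_minus_F_sq:
  "(norm (E x - F x))\<^sup>2 = (norm (E x - F (E x)))\<^sup>2 + (norm (F (x - E x)))\<^sup>2"
proof -
  have "E x - F x = (E x - F (E x)) + (- F (x - E x))"
    by (simp add: projection_diff[OF F])
  moreover have "orthogonal (E x - F (E x)) (- F (x - E x))"
    using projection_orthogonal[OF F] by (simp add: orthogonal_def)
  ultimately show ?thesis
    by (metis norm_add_Pythagorean norm_minus_cancel)
qed

lemma norm_E_minus_F_le: "norm (E x - F x) \<le> norm x"
proof (rule power2_le_imp_le)
  have "(norm (E x - F x))\<^sup>2 \<le> (norm (E x))\<^sup>2 + (norm (x - E x))\<^sup>2"
    unfolding norm_E_minus_F_sq
    using projection_complement_norm_le[OF F, of "E x"] projection_norm_le[OF F, of "x - E x"]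
    by (intro add_mono power_mono) auto
  then show "(norm (E x - F x))\<^sup>2 \<le> (norm x)\<^sup>2"
    using projection_Pythagorean[OF E, of x] by simp
qed simp

lemma norm_le_K_F_on_J_ker_E:
  assumes "c < 1" "v \<in> range J" "E v = 0"
  shows "norm v \<le> K * norm (F v)"
proof -
  obtain \<xi> \<beta> where v: "v = \<xi> + \<beta>" "\<xi> \<in> range E" "\<beta> \<in> range F"
    using assms(2) range_J_eq_S[OF assms(1)] unfolding S_def by blast
  then have "E \<beta> = - \<xi>"
    using assms(3) range_projection_iff[OF E] by (simp add: projection_add[OF E] add_eq_0_iff)
  then have v_eq: "v = \<beta> - E \<beta>"
    using v(1) by simp
  have "(norm v)\<^sup>2 = (norm \<beta>)\<^sup>2 - (norm (E \<beta>))\<^sup>2"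
    using projection_Pythagorean[OF E, of \<beta>] v_eq by simp
  then have "(1 - c\<^sup>2) * (norm \<beta>)\<^sup>2 \<le> (norm v)\<^sup>2"
    using power_mono[OF norm_E_on_F[OF v(3)], of 2] by (simp add: power_mult_distrib algebra_simps)
  then have beta: "norm \<beta> \<le> K * norm v"
    unfolding K_def using assms(1) c_nonneg
    by (intro le_powr_neg_half_mult) (auto simp: abs_square_less_1)
  have "(norm v)\<^sup>2 = inner \<beta> v - inner \<beta> (E v)"
    by (simp add: v_eq power2_norm_eq_inner inner_diff_left projection_selfadjoint[OF E])
  also have "\<dots> = inner \<beta> (F v)"
    using assms(3) range_projection_iff[OF F] v(3) projection_selfadjoint[OF F, of \<beta> v] by simp
  also have "\<dots> \<le> norm \<beta> * norm (F v)"
    by (rule norm_cauchy_schwarz)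
  also have "\<dots> \<le> K * norm v * norm (F v)"
    using beta by (rule mult_right_mono) simp
  finally have "norm v * norm v \<le> norm v * (K * norm (F v))"
    by (simp add: power2_eq_square algebra_simps)
  then show ?thesis
    using K_nonneg by (cases "v = 0") auto
qed

lemma norm_le_K_E_minus_F:
  assumes "c < 1" "x \<in> range J"
  shows "norm x \<le> K * norm (E x - F x)"
proof (rule power2_le_imp_le)
  have "x - E x \<in> range J"
    using assms(2) range_E_subset_J subspace_range_projection[OF J_projection] by (blast intro: subspace_diff)
  moreover have "E (x - E x) = 0"
    by (simp add: projection_diff[OF E] projection_idem[OF E])
  ultimately have "norm (x - E x) \<le> K * norm (F (x - E x))"
    by (rule norm_le_K_F_on_J_ker_E[OF assms(1)])
  moreover have "norm (E x) \<le> K * norm (E x - F (E x))"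
    by (rule norm_le_K[OF assms(1)]) simp
  ultimately have "(norm (E x))\<^sup>2 + (norm (x - E x))\<^sup>2 \<le> (K * norm (E x - F (E x)))\<^sup>2 + (K * norm (F (x - E x)))\<^sup>2"
    by (intro add_mono power_mono) auto
  then show "(norm x)\<^sup>2 \<le> (K * norm (E x - F x))\<^sup>2"
    using projection_Pythagorean[OF E, of x] norm_E_minus_F_sq[of x] by (simp add: power_mult_distrib algebra_simps)
  show "0 \<le> K * norm (E x - F x)"
    using K_nonneg by simp
qed

lemma E_minus_F_image_J:
  assumes "c < 1"
  shows "(\<lambda>x. E x - F x) ` range J = range J"
proof (rule selfadjoint_bounded_below_onto)
  show "bounded_linear (\<lambda>x. E x - F x)"
    using projection_bounded_linear[OF E] projection_bounded_linear[OF F] by (rule bounded_linear_sub)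
  show "inner (E x - F x) y = inner x (E y - F y)" for x y
    by (simp add: inner_diff projection_selfadjoint[OF E] projection_selfadjoint[OF F])
  show "subspace (range J)" "closed (range J)"
    by (simp_all add: subspace_range_projection[OF J_projection] closed_range_projection[OF J_projection])
  show "(\<lambda>x. E x - F x) ` range J \<subseteq> range J"
    using range_E_subset_J range_F_subset_J subspace_range_projection[OF J_projection] by (blast intro: subspace_diff)
  show "norm x \<le> K * norm (E x - F x)" if "x \<in> range J" for x
    using norm_le_K_E_minus_F[OF \<open>c < 1\<close> that] .
qed

lemma Y_subset_complement_image:
  assumes "range J = S" "y \<in> Y"
  shows "\<exists>\<xi>\<in>range E. y = \<xi> - F \<xi>"
proof -
  have "y \<in> S"
    using assms mem_Y_iff by (metis rangeI)
  then obtain \<xi> \<beta> where y: "y = \<xi> + \<beta>" "\<xi> \<in> range E" "\<beta> \<in> range F"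
    unfolding S_def by blast
  have "y = y - F y"
    using assms(2) mem_Y_iff by simp
  also have "\<dots> = \<xi> - F \<xi>"
    using y range_projection_iff[OF F] by (simp add: projection_add[OF F])
  finally show ?thesis
    using y(2) by blast
qed

text \<open>On Y the projection E is the adjoint of \<open>1 - F\<close> restricted to EH, so surjectivity of
  the latter becomes a lower bound for the former.\<close>

lemma norm_le_E_on_Y:
  assumes "range J = S"
  shows "\<exists>M>0. \<forall>z\<in>Y. norm z \<le> M * norm (E z)"
proof (rule uniform_boundedness_inner[OF subspace_Y closed_Y])
  fix y assume "y \<in> Y"
  then obtain \<xi> where \<xi>: "\<xi> \<in> range E" "y = \<xi> - F \<xi>"
    using Y_subset_complement_image[OF assms] by blast
  have "\<bar>inner y z\<bar> \<le> norm \<xi> * norm (E z)" if "z \<in> Y" for z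
  proof -
    have "inner y z = inner (E \<xi>) z"
      using \<xi> inner_Y_complement_F[OF that] range_projection_iff[OF E] by simp
    then show ?thesis
      using Cauchy_Schwarz_ineq2[of \<xi> "E z"] by (simp add: projection_selfadjoint[OF E])
  qed
  then show "\<exists>C. \<forall>z\<in>Y. \<bar>inner y z\<bar> \<le> C * norm (E z)"
    by blast
qed simp

lemma E_image_Y:
  assumes "range E \<inter> range F = {0}" "range J = S"
  shows "E ` Y = range E"
proof (rule closed_subspace_eqI)
  obtain M where "\<forall>z\<in>Y. norm z \<le> M * norm (E z)"
    using norm_le_E_on_Y[OF assms(2)] by blast
  then show "closed (E ` Y)"
    using closed_image_bounded_below[OF projection_bounded_linear[OF E] subspace_Y closed_Y] by blast
  show "subspace (E ` Y)"
    using projection_bounded_linear[OF E] subspace_Y by (simp add: bounded_linear.linear linear_subspace_image)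
  show "subspace (range E)" "E ` Y \<subseteq> range E"
    by (auto simp: subspace_range_projection[OF E])
  fix \<xi> assume \<xi>: "\<xi> \<in> range E" and orth: "\<forall>r\<in>E ` Y. inner \<xi> r = 0"
  have "J \<xi> = \<xi>"
    using \<xi> range_E_subset_J range_projection_iff[OF J_projection] by blast
  then have "\<xi> - F \<xi> \<in> Y"
    by (simp add: mem_Y_iff projection_diff[OF J_projection] projection_diff[OF F] projection_idem[OF F] J_F)
  then have "inner (E \<xi>) (\<xi> - F \<xi>) = 0"
    using orth by (simp add: projection_selfadjoint[OF E])
  then have "inner (\<xi> - F \<xi>) (\<xi> - F \<xi>) = 0"
    using \<xi> range_projection_iff[OF E] projection_orthogonal[OF F, of \<xi> \<xi>]
    by (simp add: inner_diff_left inner_commute)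
  then have "\<xi> \<in> range F"
    using range_projection_iff[OF F] by simp
  then show "\<xi> = 0"
    using \<xi> assms(1) by blast
qed

lemma c_less_1_if_complementary:
  assumes "range E \<inter> range F = {0}" "range J = S"
  shows "c < 1"
proof -
  obtain M where M: "M > 0" "\<forall>z\<in>Y. norm z \<le> M * norm (E z)"
    using norm_le_E_on_Y[OF assms(2)] by blast
  have "norm \<xi> \<le> M * norm (\<xi> - F \<xi>)" if "\<xi> \<in> range E" for \<xi>
  proof -
    have "\<xi> \<in> E ` Y"
      using E_image_Y[OF assms] that by simp
    then obtain z where z: "z \<in> Y" "\<xi> = E z"
      by blast
    have "(norm \<xi>)\<^sup>2 = inner (E \<xi>) z"
      using z(2) by (simp add: power2_norm_eq_inner projection_selfadjoint[OF E])
    also have "\<dots> = inner (\<xi> - F \<xi>) z"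
      using z inner_Y_complement_F[OF z(1)] by (simp add: projection_idem[OF E])
    also have "\<dots> \<le> norm (\<xi> - F \<xi>) * (M * norm \<xi>)"
      using norm_cauchy_schwarz[of "\<xi> - F \<xi>" z] M(2) z
      by (meson mult_left_mono norm_ge_zero order_trans)
    finally have "norm \<xi> * norm \<xi> \<le> norm \<xi> * (M * norm (\<xi> - F \<xi>))"
      by (simp add: power2_eq_square algebra_simps)
    then show ?thesis
      using M(1) by (cases "\<xi> = 0") auto
  qed
  then show ?thesis
    by (rule c_less_1_if_bounded_below)
qed

lemma proj_meet_eq_0_iff: "proj_meet E F = (\<lambda>_. 0) \<longleftrightarrow> range E \<inter> range F = {0}"
proof
  have M: "subspace (range E \<inter> range F)" "closed (range E \<inter> range F)"
    using E F by (simp_all add: subspace_inter subspace_range_projection closed_Int closed_range_projection)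
  assume "proj_meet E F = (\<lambda>_. 0)"
  then show "range E \<inter> range F = {0}"
    using range_proj_onto[OF M] unfolding proj_meet_def by auto
next
  assume "range E \<inter> range F = {0}"
  then show "proj_meet E F = (\<lambda>_. 0)"
    unfolding proj_meet_def by (simp add: proj_onto_zero)
qed

lemma complementary_iff: "proj_meet E F = (\<lambda>_. 0) \<and> range J = S \<longleftrightarrow> c < 1"
proof
  assume "proj_meet E F = (\<lambda>_. 0) \<and> range J = S"
  then show "c < 1"
    by (intro c_less_1_if_complementary) (simp_all add: proj_meet_eq_0_iff)
next
  assume "c < 1"
  then show "proj_meet E F = (\<lambda>_. 0) \<and> range J = S"
    by (simp add: proj_meet_eq_0_iff range_E_Int_range_F range_J_eq_S)
qed

lemma invertible_E_minus_F_iff: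
  "invertible_between (\<lambda>x. E x - F x) (range J) (range J) \<longleftrightarrow> c < 1"
proof
  assume "invertible_between (\<lambda>x. E x - F x) (range J) (range J)"
  then obtain C where C: "\<forall>x\<in>range J. norm x \<le> C * norm (E x - F x)"
    unfolding invertible_between_iff by blast
  have "norm \<xi> \<le> C * norm (\<xi> - F \<xi>)" if "\<xi> \<in> range E" for \<xi>
  proof -
    have "\<xi> \<in> range J" "E \<xi> = \<xi>"
      using that range_E_subset_J range_projection_iff[OF E] by blast+
    then show ?thesis
      using C by metis
  qed
  then show "c < 1"
    by (rule c_less_1_if_bounded_below)
next
  assume "c < 1"
  have "linear (\<lambda>x. E x - F x)"
    using projection_bounded_linear[OF E] projection_bounded_linear[OF F]
    by (simp add: bounded_linear.linear bounded_linear_sub)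
  then have "inj_on (\<lambda>x. E x - F x) (range J)"
    using subspace_range_projection[OF J_projection] norm_le_K_E_minus_F[OF \<open>c < 1\<close>]
    by (rule inj_on_bounded_below)
  then show "invertible_between (\<lambda>x. E x - F x) (range J) (range J)"
    unfolding invertible_between_iff bij_betw_def
    using E_minus_F_image_J[OF \<open>c < 1\<close>] norm_le_K_E_minus_F[OF \<open>c < 1\<close>] by blast
qed

lemma J_E_minus_F_E_on_E: "\<xi> \<in> range E \<Longrightarrow> J (E \<xi>) - F (E \<xi>) = \<xi> - F \<xi>"
  using range_projection_iff[OF E] J_E by metis

lemma invertible_J_E_minus_F_E_iff:
  "invertible_between (\<lambda>x. J (E x) - F (E x)) (range E) Y \<longleftrightarrow> c < 1"
proof
  assume "invertible_between (\<lambda>x. J (E x) - F (E x)) (range E) Y"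
  then obtain C where "\<forall>x\<in>range E. norm x \<le> C * norm (J (E x) - F (E x))"
    unfolding invertible_between_iff by blast
  then show "c < 1"
    using J_E_minus_F_E_on_E by (intro c_less_1_if_bounded_below) auto
next
  assume "c < 1"
  have "linear (\<lambda>x. x - F x)"
    using bounded_linear_ident projection_bounded_linear[OF F]
    by (simp add: bounded_linear.linear bounded_linear_sub)
  then have "inj_on (\<lambda>x. x - F x) (range E)"
    using subspace_range_projection[OF E] norm_le_K[OF \<open>c < 1\<close>]
    by (rule inj_on_bounded_below)
  moreover have "inj_on (\<lambda>x. J (E x) - F (E x)) (range E) \<longleftrightarrow> inj_on (\<lambda>x. x - F x) (range E)"
    by (rule inj_on_cong) (rule J_E_minus_F_E_on_E)
  ultimately have "inj_on (\<lambda>x. J (E x) - F (E x)) (range E)"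
    by blast
  moreover have "(\<lambda>x. J (E x) - F (E x)) ` range E = Y"
  proof
    show "(\<lambda>x. J (E x) - F (E x)) ` range E \<subseteq> Y"
      unfolding Y_def by blast
    show "Y \<subseteq> (\<lambda>x. J (E x) - F (E x)) ` range E"
      using Y_subset_complement_image[OF range_J_eq_S[OF \<open>c < 1\<close>]] J_E_minus_F_E_on_E by force
  qed
  moreover have "\<forall>x\<in>range E. norm x \<le> K * norm (J (E x) - F (E x))"
    using norm_le_K[OF \<open>c < 1\<close>] J_E_minus_F_E_on_E by simp
  ultimately show "invertible_between (\<lambda>x. J (E x) - F (E x)) (range E) Y"
    unfolding invertible_between_iff bij_betw_def by blast
qed

lemma opnorm_on_inverse_eq_K:
  fixes T :: "'a \<Rightarrow> 'a"
  assumes "c < 1" "bij_betw T V W" "range E \<subseteq> V" "\<And>\<xi>. \<xi> \<in> range E \<Longrightarrow> T \<xi> = \<xi> - F \<xi>"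
    and "\<And>x. x \<in> V \<Longrightarrow> norm (T x) \<le> norm x" "\<And>x. x \<in> V \<Longrightarrow> norm x \<le> K * norm (T x)"
    and "x0 \<in> V" "x0 \<noteq> 0"
  shows "opnorm_on W (inv_into V T) = K"
proof (rule antisym)
  let ?G = "inv_into V T"
  have inj: "inj_on T V" and image: "T ` V = W"
    using assms(2) by (auto simp: bij_betw_def)
  have G: "?G y \<in> V" "T (?G y) = y" if "y \<in> W" for y
    using that image by (auto intro: inv_into_into f_inv_into_f)
  have G_T: "?G (T x) = x" if "x \<in> V" for x
    using inj that by (rule inv_into_f_f)
  have T_ne: "T x \<noteq> 0" if "x \<in> V" "x \<noteq> 0" for x
    using assms(6)[OF that(1)] that(2) by auto
  have G_le: "norm (?G y) \<le> K * norm y" if "y \<in> W" for y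
    using assms(6)[OF G(1)[OF that]] G(2)[OF that] by simp
  have "T x0 \<in> W" "T x0 \<noteq> 0"
    using assms(7,8) image T_ne by auto
  then show "opnorm_on W ?G \<le> K"
    using G_le by (intro opnorm_on_le) auto
  let ?s = "opnorm_on W ?G"
  have s: "norm x \<le> ?s * norm (T x)" if "x \<in> V" "x \<noteq> 0" for x
    using norm_le_opnorm_on[OF G_le, where y = "T x"] that image T_ne G_T by auto
  have "norm (T x0) \<le> ?s * norm (T x0)"
    using assms(5)[OF assms(7)] s[OF assms(7,8)] by linarith
  then have "1 \<le> ?s"
    using \<open>T x0 \<noteq> 0\<close> by simp
  moreover have "\<forall>\<xi>\<in>range E. norm \<xi> \<le> ?s * norm (\<xi> - F \<xi>)"
  proof
    fix \<xi> assume "\<xi> \<in> range E"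
    then show "norm \<xi> \<le> ?s * norm (\<xi> - F \<xi>)"
      using s[of \<xi>] assms(3,4) projection_zero[OF F] by (cases "\<xi> = 0") auto
  qed
  ultimately show "K \<le> opnorm_on W ?G"
    using bounded_below_on_E_iff by blast
qed

lemma opnorm_on_inverse_E_minus_F:
  assumes "c < 1" "J \<noteq> (\<lambda>_. 0)"
  shows "opnorm_on (range J) (inv_into (range J) (\<lambda>x. E x - F x)) = K"
proof -
  obtain x0 where "x0 \<in> range J" "x0 \<noteq> 0"
    using assms(2) by blast
  moreover have "bij_betw (\<lambda>x. E x - F x) (range J) (range J)"
    using invertible_E_minus_F_iff assms(1) by (simp add: invertible_between_iff)
  ultimately show ?thesis
    using range_E_subset_J range_projection_iff[OF E] norm_E_minus_F_le norm_le_K_E_minus_F[OF assms(1)]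
    by (intro opnorm_on_inverse_eq_K[OF assms(1)]) auto
qed

lemma opnorm_on_inverse_J_E_minus_F_E:
  assumes "c < 1" "E \<noteq> (\<lambda>_. 0)"
  shows "opnorm_on Y (inv_into (range E) (\<lambda>x. J (E x) - F (E x))) = K"
proof -
  obtain x0 where "x0 \<in> range E" "x0 \<noteq> 0"
    using assms(2) by blast
  moreover have "bij_betw (\<lambda>x. J (E x) - F (E x)) (range E) Y"
    using invertible_J_E_minus_F_E_iff assms(1) by (simp add: invertible_between_iff)
  ultimately show ?thesis
    using J_E_minus_F_E_on_E projection_complement_norm_le[OF F] norm_le_K[OF assms(1)]
    by (intro opnorm_on_inverse_eq_K[OF assms(1)]) auto
qed

end

theorem lemma3p7:
  fixes E F :: "'a::{real_inner, complete_space} \<Rightarrow> 'a"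
  assumes "is_projection E" and "is_projection F"
  defines "J \<equiv> proj_join E F"
  defines "C1 \<equiv> proj_meet E F = (\<lambda>_. 0) \<and> range J = {\<xi> + \<beta> | \<xi> \<beta>. \<xi> \<in> range E \<and> \<beta> \<in> range F}"
  defines "C2 \<equiv> invertible_between (\<lambda>x. E x - F x) (range J) (range J)"
  defines "C3 \<equiv> invertible_between (\<lambda>x. J (E x) - F (E x)) (range E) (range (\<lambda>x. J x - F x))"
  shows "(C1 \<longleftrightarrow> C2) \<and> (C2 \<longleftrightarrow> C3)
    \<and> (C2 \<and> J \<noteq> (\<lambda>_. 0) \<longrightarrow>
           opnorm_on (range J) (inv_into (range J) (\<lambda>x. E x - F x))
             = (1 - (onorm (E \<circ> F))\<^sup>2) powr (-1/2))
    \<and> (C2 \<and> E \<noteq> (\<lambda>_. 0) \<longrightarrow>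
           opnorm_on (range (\<lambda>x. J x - F x)) (inv_into (range E) (\<lambda>x. J (E x) - F (E x)))
             = (1 - (onorm (E \<circ> F))\<^sup>2) powr (-1/2))"
proof -
  interpret P: two_projections E F
    using assms(1,2) by (rule two_projections.intro)
  have "C1 \<longleftrightarrow> P.c < 1" "C2 \<longleftrightarrow> P.c < 1" "C3 \<longleftrightarrow> P.c < 1"
    unfolding C1_def C2_def C3_def J_def P.Y_def[symmetric] P.S_def[symmetric]
    by (fact P.complementary_iff P.invertible_E_minus_F_iff P.invertible_J_E_minus_F_E_iff)+
  moreover have "(1 - (onorm (E \<circ> F))\<^sup>2) powr (-1/2) = P.K"
    unfolding P.K_def P.c_def ..
  ultimately show ?thesis
    unfolding J_def P.Y_def[symmetric]
    using P.opnorm_on_inverse_E_minus_F P.opnorm_on_inverse_J_E_minus_F_E by auto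
qed

end
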